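(* If $G$ is a $t$-clique-sum of graphs $G_1$ and $G_2$ and $r\in\mathbb{N}$, then $\xi_{[r]}(G)=\max\{\xi_{[r]}(G_1),\xi_{[r]}(G_2)\}$.
   Context: A $t$-clique-sum of $G_1$ and $G_2$ is the graph $G=G_1\cup G_2$ (vertex and edge sets the unions) where $G_1$ and $G_2$ intersect exactly in a complete graph $K_t$ (i.e. $V(G_1)\cap V(G_2)$ has $t$ vertices, pairwise adjacent in both, and $G_1,G_2$ are induced subgraphs of $G$). A $(d;r)$ orthogonal subspace representation of $G$ is a family $\{S_u\}_{u\in V(G)}$ of $r$-dimensional subspaces of $\mathbb{C}^d$ with $S_u\perp S_v$ whenever $uv\in E(G)$; $\xi_{[r]}(G)$ is the least $d$ for which one exists. *)

theory Defs
  imports Complex_Main "HOL-Library.Function_Algebras"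
begin

definition simple_graph :: "'a set \<Rightarrow> 'a set set \<Rightarrow> bool" where
  "simple_graph V E \<longleftrightarrow> finite V \<and> (\<forall>e\<in>E. \<exists>u v. e = {u, v} \<and> u \<in> V \<and> v \<in> V \<and> u \<noteq> v)"

definition clique_sum ::
  "nat \<Rightarrow> 'a set \<Rightarrow> 'a set set \<Rightarrow> 'a set \<Rightarrow> 'a set set \<Rightarrow> 'a set \<Rightarrow> 'a set set \<Rightarrow> bool" where
  "clique_sum t V E V1 E1 V2 E2 \<longleftrightarrow>
     V = V1 \<union> V2 \<and> E = E1 \<union> E2 \<and>
     card (V1 \<inter> V2) = t \<and>
     (\<forall>u\<in>V1 \<inter> V2. \<forall>v\<in>V1 \<inter> V2. u \<noteq> v \<longrightarrow> {u, v} \<in> E1 \<and> {u, v} \<in> E2) \<and>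
     E1 = {e\<in>E. e \<subseteq> V1} \<and> E2 = {e\<in>E. e \<subseteq> V2}"

text \<open>Vectors of C^d are represented as functions nat => complex vanishing from index d on.\<close>
definition cscale :: "complex \<Rightarrow> (nat \<Rightarrow> complex) \<Rightarrow> (nat \<Rightarrow> complex)" where
  "cscale c v = (\<lambda>i. c * v i)"

definition cvecs :: "nat \<Rightarrow> (nat \<Rightarrow> complex) set" where
  "cvecs d = {v. \<forall>i\<ge>d. v i = 0}"

definition cinner :: "nat \<Rightarrow> (nat \<Rightarrow> complex) \<Rightarrow> (nat \<Rightarrow> complex) \<Rightarrow> complex" where
  "cinner d v w = (\<Sum>i<d. v i * cnj (w i))"

definition orth_subspaces :: "nat \<Rightarrow> (nat \<Rightarrow> complex) set \<Rightarrow> (nat \<Rightarrow> complex) set \<Rightarrow> bool" where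
  "orth_subspaces d S T \<longleftrightarrow> (\<forall>x\<in>S. \<forall>y\<in>T. cinner d x y = 0)"

definition subspace_dim :: "nat \<Rightarrow> nat \<Rightarrow> (nat \<Rightarrow> complex) set \<Rightarrow> bool" where
  "subspace_dim d r S \<longleftrightarrow> module.subspace cscale S \<and> S \<subseteq> cvecs d \<and> vector_space.dim cscale S = r"

definition osr :: "'a set \<Rightarrow> 'a set set \<Rightarrow> nat \<Rightarrow> nat \<Rightarrow> ('a \<Rightarrow> (nat \<Rightarrow> complex) set) \<Rightarrow> bool" where
  "osr V E d r S \<longleftrightarrow> (\<forall>u\<in>V. subspace_dim d r (S u)) \<and>
     (\<forall>u\<in>V. \<forall>v\<in>V. {u, v} \<in> E \<longrightarrow> orth_subspaces d (S u) (S v))"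

definition xi :: "nat \<Rightarrow> 'a set \<Rightarrow> 'a set set \<Rightarrow> nat" where
  "xi r V E = (LEAST d. \<exists>S. osr V E d r S)"

end

(*
  Restricting a representation of G to G1 or G2 gives xi(Gi) <= xi(G). Conversely, pad
  representations of G1 and G2 with zeros to the common dimension max xi(Gi). On the clique
  K = V1 \<inter> V2 the subspaces are pairwise orthogonal, so orthonormal bases of them form, on
  either side, an orthonormal system of |K| r vectors. A unitary map (a product of
  Householder-type maps) carries the system of G2 onto that of G1; after applying it to the
  whole representation of G2 both representations agree on K, and since every edge of G lies in
  G1 or in G2 they glue to a representation of G.
*)
theory Submission
  imports Defs
begin

interpretation cv: vector_space cscale
  by unfold_locales (auto simp: cscale_def algebra_simps)

lemma cscale_apply: "cscale c v i = c * v i"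
  by (simp add: cscale_def)

lemma sum_fun_apply: "(sum f A) i = (\<Sum>a\<in>A. f a i)"
  for f :: "'b \<Rightarrow> 'c \<Rightarrow> 'd::comm_monoid_add"
  by (induction A rule: infinite_finite_induct) auto

lemma cinner_add_left: "cinner d (x + y) z = cinner d x z + cinner d y z"
  by (simp add: cinner_def algebra_simps sum.distrib)

lemma cinner_add_right: "cinner d x (y + z) = cinner d x y + cinner d x z"
  by (simp add: cinner_def algebra_simps sum.distrib)

lemma cinner_diff_left: "cinner d (x - y) z = cinner d x z - cinner d y z"
  by (simp add: cinner_def algebra_simps sum_subtractf)

lemma cinner_diff_right: "cinner d x (y - z) = cinner d x y - cinner d x z"
  by (simp add: cinner_def algebra_simps sum_subtractf)

lemma cinner_scale_left: "cinner d (cscale c x) y = c * cinner d x y"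
  by (simp add: cscale_apply cinner_def sum_distrib_left algebra_simps)

lemma cinner_scale_right: "cinner d x (cscale c y) = cnj c * cinner d x y"
  by (simp add: cscale_apply cinner_def sum_distrib_left algebra_simps)

lemma cinner_zero_left [simp]: "cinner d 0 y = 0"
  by (simp add: cinner_def)

lemma cinner_sum_left: "cinner d (sum f A) y = (\<Sum>a\<in>A. cinner d (f a) y)"
  unfolding cinner_def sum_fun_apply sum_distrib_right by (rule sum.swap)

lemma cinner_commute: "cinner d y x = cnj (cinner d x y)"
  by (simp add: cinner_def mult.commute)

lemma cinner_self: "cinner d x x = of_real (\<Sum>i<d. (cmod (x i))\<^sup>2)"
  unfolding cinner_def of_real_sum by (intro sum.cong refl) (simp only: complex_norm_square)

lemma cinner_self_eq_0:
  assumes x: "x \<in> cvecs d" and "cinner d x x = 0"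
  shows "x = 0"
proof
  fix i
  have "(\<Sum>i<d. (cmod (x i))\<^sup>2) = 0"
    using assms(2) unfolding cinner_self of_real_eq_0_iff .
  then have "\<forall>i<d. x i = 0"
    by (subst (asm) sum_nonneg_eq_0_iff) auto
  then show "x i = 0 i"
    using x by (cases "i < d") (auto simp: cvecs_def)
qed

lemma cinner_lift:
  assumes "x \<in> cvecs d" "d \<le> d'"
  shows "cinner d' x y = cinner d x y"
  unfolding cinner_def
  by (rule sum.mono_neutral_right) (use assms in \<open>auto simp: cvecs_def\<close>)

lemma cvecs_mono: "d \<le> d' \<Longrightarrow> cvecs d \<subseteq> cvecs d'"
  by (auto simp: cvecs_def)

lemma subspace_cvecs: "cv.subspace (cvecs d)"
  by (auto simp: cv.subspace_def cvecs_def cscale_apply)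

lemma span_subset_cvecs: "X \<subseteq> cvecs d \<Longrightarrow> cv.span X \<subseteq> cvecs d"
  by (rule cv.span_minimal[OF _ subspace_cvecs])

lemma cinner_span_eq_0:
  assumes XY: "\<forall>a\<in>X. \<forall>b\<in>Y. cinner d a b = 0"
    and x: "x \<in> cv.span X" and y: "y \<in> cv.span Y"
  shows "cinner d x y = 0"
proof -
  have x_orth: "\<forall>b\<in>Y. cinner d x b = 0"
    using x
  proof (induction rule: cv.span_induct_alt)
    case base
    then show ?case by (simp add: cinner_def)
  next
    case (step c x y)
    then show ?case by (metis XY cinner_add_left cinner_scale_left mult_zero_right add_0)
  qed
  from y show ?thesis
  proof (induction rule: cv.span_induct_alt)
    case base
    then show ?case by (simp add: cinner_def)
  next
    case (step c y z)
    then show ?case by (metis x_orth cinner_add_right cinner_scale_right mult_zero_right add_0)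
  qed
qed

definition orthonormal_family :: "nat \<Rightarrow> 'i set \<Rightarrow> ('i \<Rightarrow> nat \<Rightarrow> complex) \<Rightarrow> bool" where
  "orthonormal_family d I e \<longleftrightarrow> (\<forall>i\<in>I. e i \<in> cvecs d) \<and>
     (\<forall>i\<in>I. \<forall>j\<in>I. cinner d (e i) (e j) = (if i = j then 1 else 0))"

lemma orthonormal_family_subset:
  "orthonormal_family d J e \<Longrightarrow> I \<subseteq> J \<Longrightarrow> orthonormal_family d I e"
  unfolding orthonormal_family_def by blast

lemma orthonormal_family_reindex:
  assumes "orthonormal_family d I e" "inj_on f J" "f ` J \<subseteq> I"
  shows "orthonormal_family d J (e \<circ> f)"
  using assms unfolding orthonormal_family_def inj_on_def by (auto simp: subset_eq)

lemma orthonormal_family_inj: "orthonormal_family d I e \<Longrightarrow> inj_on e I"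
  unfolding orthonormal_family_def inj_on_def by (metis zero_neq_one)

lemma orthonormal_family_independent:
  assumes e: "orthonormal_family d I e" and fin: "finite I"
  shows "cv.independent (e ` I)"
proof
  assume "cv.dependent (e ` I)"
  then obtain u where u: "\<exists>v\<in>e ` I. u v \<noteq> 0" "(\<Sum>v\<in>e ` I. cscale (u v) v) = 0"
    using cv.dependent_finite[of "e ` I"] fin by auto
  then obtain i0 where i0: "i0 \<in> I" "u (e i0) \<noteq> 0"
    by auto
  have "0 = cinner d (\<Sum>v\<in>e ` I. cscale (u v) v) (e i0)"
    using u(2) by simp
  also have "\<dots> = (\<Sum>j\<in>I. u (e j) * cinner d (e j) (e i0))"
    by (simp add: cinner_sum_left cinner_scale_left sum.reindex[OF orthonormal_family_inj[OF e]])
  also have "\<dots> = (\<Sum>j\<in>I. if j = i0 then u (e i0) else 0)"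
    using e i0(1) by (intro sum.cong refl) (auto simp: orthonormal_family_def)
  also have "\<dots> = u (e i0)"
    using i0(1) fin by simp
  finally show False
    using i0(2) by simp
qed

lemma subspace_dim_span_orthonormal_family:
  assumes e: "orthonormal_family d {..<r} e"
  shows "subspace_dim d r (cv.span (e ` {..<r}))"
proof -
  have "e ` {..<r} \<subseteq> cvecs d"
    using e by (auto simp: orthonormal_family_def)
  moreover have "cv.dim (cv.span (e ` {..<r})) = r"
    using cv.dim_span_eq_card_independent[OF orthonormal_family_independent[OF e]]
      card_image[OF orthonormal_family_inj[OF e]] by simp
  ultimately show ?thesis
    unfolding subspace_dim_def using span_subset_cvecs cv.subspace_span by blast
qed

definition unitary :: "nat \<Rightarrow> ((nat \<Rightarrow> complex) \<Rightarrow> (nat \<Rightarrow> complex)) \<Rightarrow> bool" where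
  "unitary d U \<longleftrightarrow>
     (\<forall>x\<in>cvecs d. U x \<in> cvecs d) \<and> (\<forall>x y. cinner d (U x) (U y) = cinner d x y)"

lemma unitary_id: "unitary d id"
  by (simp add: unitary_def)

lemma unitary_comp: "unitary d U \<Longrightarrow> unitary d W \<Longrightarrow> unitary d (W \<circ> U)"
  by (auto simp: unitary_def)

lemma orthonormal_family_unitary_image:
  "orthonormal_family d I e \<Longrightarrow> unitary d U \<Longrightarrow> orthonormal_family d I (U \<circ> e)"
  by (auto simp: orthonormal_family_def unitary_def)

text \<open>The rank-one perturbation x \<mapsto> x + g \<langle>x, w\<rangle> w of the identity; with
  g = -2 / \<langle>w, w\<rangle> it is the Householder reflection in w, with \<langle>w, w\<rangle> = 1 and
  g = c - 1 the phase change by c on the line through w.\<close>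
definition householder :: "nat \<Rightarrow> complex \<Rightarrow> (nat \<Rightarrow> complex) \<Rightarrow> (nat \<Rightarrow> complex) \<Rightarrow> (nat \<Rightarrow> complex)" where
  "householder d g w x = x + cscale (g * cinner d x w) w"

lemma unitary_householder:
  assumes w: "w \<in> cvecs d" and g: "g + cnj g + g * cnj g * cinner d w w = 0"
  shows "unitary d (householder d g w)"
  unfolding unitary_def
proof (intro conjI ballI allI)
  fix x
  assume "x \<in> cvecs d"
  then show "householder d g w x \<in> cvecs d"
    using w by (auto simp: householder_def cvecs_def cscale_apply)
next
  fix x y
  have "cinner d (householder d g w x) (householder d g w y) = cinner d x y +
      cinner d x w * cinner d w y * (g + cnj g + g * cnj g * cinner d w w)"
    unfolding householder_def cinner_add_left cinner_add_right cinner_scale_left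
      cinner_scale_right cinner_commute[of d w y]
    by (simp add: algebra_simps)
  then show "cinner d (householder d g w x) (householder d g w y) = cinner d x y"
    using g by simp
qed

lemma householder_fixes_orthogonal: "cinner d x w = 0 \<Longrightarrow> householder d g w x = x"
  by (simp add: householder_def cscale_def fun_eq_iff)

text \<open>A reflection takes a to the unit vector c b of the same phase as \<langle>a, b\<rangle>,
  then a phase change on the line through b takes c b to b.\<close>
lemma unitary_maps_unit_vector:
  assumes a: "a \<in> cvecs d" "cinner d a a = 1" and b: "b \<in> cvecs d" "cinner d b b = 1"
  obtains W where "unitary d W" "W a = b"
    "\<And>x. cinner d x a = 0 \<Longrightarrow> cinner d x b = 0 \<Longrightarrow> W x = x"
proof -
  define p where "p = cinner d a b"
  define c where "c = (if p = 0 then 1 else p / of_real (cmod p))"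
  have c_p: "cnj c * p = of_real (cmod p)" and c_unit: "c * cnj c = 1"
    by (cases "p = 0"; auto simp: c_def complex_norm_square[symmetric] power2_eq_square field_simps)+
  define w where "w = a - cscale c b"
  have w: "w \<in> cvecs d"
    using a b by (auto simp: w_def cvecs_def cscale_apply)
  have c_p': "c * cnj p = of_real (cmod p)"
    using arg_cong[OF c_p, of cnj] by simp
  have "cinner d w w = 2 * cinner d a w"
    unfolding w_def cinner_diff_left cinner_diff_right cinner_scale_left cinner_scale_right
    using a b c_p c_p' c_unit by (simp add: p_def cinner_commute[of d b a] algebra_simps)
  define g where "g = (if cinner d w w = 0 then 0 else - 2 / cinner d w w)"
  have "cnj (cinner d w w) = cinner d w w"
    by (simp add: cinner_commute[symmetric])
  then have g: "g + cnj g + g * cnj g * cinner d w w = 0"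
    by (auto simp: g_def field_simps)
  have reflect: "householder d g w a = cscale c b"
  proof (cases "cinner d w w = 0")
    case True
    then have "w = 0"
      using cinner_self_eq_0[OF w] by simp
    moreover from this have "a = cscale c b"
      by (simp add: w_def)
    ultimately show ?thesis
      by (simp add: householder_def cscale_def fun_eq_iff)
  next
    case False
    then have "g * cinner d a w = -1"
      using \<open>cinner d w w = 2 * cinner d a w\<close> by (simp add: g_def field_simps)
    then show ?thesis
      by (simp add: householder_def w_def fun_eq_iff cscale_def)
  qed
  define h where "h = cnj c - 1"
  have h: "h + cnj h + h * cnj h * cinner d b b = 0"
    using b c_unit by (simp add: h_def algebra_simps)
  have rotate: "householder d h b (cscale c b) = b"
    unfolding householder_def cinner_scale_left b(2)
    using c_unit by (simp add: cscale_def h_def fun_eq_iff algebra_simps)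
  show ?thesis
  proof
    show "unitary d (householder d h b \<circ> householder d g w)"
      by (rule unitary_comp[OF unitary_householder[OF w g] unitary_householder[OF b(1) h]])
    show "(householder d h b \<circ> householder d g w) a = b"
      by (simp add: reflect rotate)
    fix x
    assume "cinner d x a = 0" "cinner d x b = 0"
    moreover from this have "cinner d x w = 0"
      by (simp add: w_def cinner_diff_right cinner_scale_right)
    ultimately show "(householder d h b \<circ> householder d g w) x = x"
      by (simp add: householder_fixes_orthogonal)
  qed
qed

lemma unitary_maps_orthonormal_family:
  assumes "finite I" "orthonormal_family d I a" "orthonormal_family d I b"
  obtains U where "unitary d U" "\<And>i. i \<in> I \<Longrightarrow> U (a i) = b i"
  using assms
proof (induction I arbitrary: thesis rule: finite_induct)
  case empty
  then show ?case
    using unitary_id by blast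
next
  case (insert j I)
  obtain U where U: "unitary d U" "\<And>i. i \<in> I \<Longrightarrow> U (a i) = b i"
    using insert.IH insert.prems orthonormal_family_subset[of d "insert j I" _ I] by blast
  have "a j \<in> cvecs d" "cinner d (a j) (a j) = 1"
    using insert.prems by (auto simp: orthonormal_family_def)
  then have Uaj: "U (a j) \<in> cvecs d" "cinner d (U (a j)) (U (a j)) = 1"
    using U(1) by (auto simp: unitary_def)
  have bj: "b j \<in> cvecs d" "cinner d (b j) (b j) = 1"
    using insert.prems by (auto simp: orthonormal_family_def)
  obtain W where W: "unitary d W" "W (U (a j)) = b j"
    "\<And>x. cinner d x (U (a j)) = 0 \<Longrightarrow> cinner d x (b j) = 0 \<Longrightarrow> W x = x"
    using unitary_maps_unit_vector[OF Uaj bj] by blast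
  have on_I: "(W \<circ> U) (a i) = b i" if i: "i \<in> I" for i
  proof -
    have "i \<noteq> j"
      using i insert.hyps by blast
    have "cinner d (b i) (U (a j)) = cinner d (a i) (a j)"
      using U(1) U(2)[OF i, symmetric] by (simp add: unitary_def)
    also have "\<dots> = 0"
      using insert.prems(2) i \<open>i \<noteq> j\<close> by (auto simp: orthonormal_family_def)
    finally show ?thesis
      using W(3) insert.prems(3) i \<open>i \<noteq> j\<close> U(2) by (auto simp: orthonormal_family_def)
  qed
  show ?case
    by (rule insert.prems(1)[OF unitary_comp[OF U(1) W(1)]]) (use on_I W(2) in auto)
qed

lemma normalise_vector:
  assumes y: "y \<in> cvecs d" "y \<noteq> 0"
  obtains k where "k \<noteq> 0" "cinner d (cscale k y) (cscale k y) = 1"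
proof
  define t where "t = (\<Sum>i<d. (cmod (y i))\<^sup>2)"
  have yy: "cinner d y y = of_real t"
    by (simp add: t_def cinner_self)
  then have "t \<noteq> 0"
    using y cinner_self_eq_0 by auto
  then have t: "t > 0"
    unfolding t_def by (metis sum_nonneg zero_le_power2 order_le_neq_trans)
  show "complex_of_real (1 / sqrt t) \<noteq> 0"
    using t by simp
  have "cinner d (cscale (1 / sqrt t) y) (cscale (1 / sqrt t) y) =
      of_real (1 / sqrt t) * of_real (1 / sqrt t) * of_real t"
    by (simp add: cinner_scale_left cinner_scale_right yy)
  also have "\<dots> = of_real ((1 / sqrt t)\<^sup>2 * t)"
    by (simp only: of_real_mult power2_eq_square)
  also have "\<dots> = 1"
    using t by (simp add: power_divide)
  finally show "cinner d (cscale (1 / sqrt t) y) (cscale (1 / sqrt t) y) = 1" .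
qed

lemma cinner_projection_residual:
  assumes B: "finite B" "orthonormal_family d B id" and b: "b \<in> B"
  shows "cinner d (x - (\<Sum>c\<in>B. cscale (cinner d x c) c)) b = 0"
proof -
  have "cinner d (\<Sum>c\<in>B. cscale (cinner d x c) c) b = (\<Sum>c\<in>B. cinner d x c * cinner d c b)"
    by (simp add: cinner_sum_left cinner_scale_left)
  also have "\<dots> = (\<Sum>c\<in>B. if c = b then cinner d x c else 0)"
    using B(2) b by (intro sum.cong refl) (auto simp: orthonormal_family_def)
  also have "\<dots> = cinner d x b"
    using B(1) b by simp
  finally show ?thesis
    by (simp add: cinner_diff_left)
qed

lemma span_insert_normalised_residual:
  assumes "s \<in> cv.span B" "k \<noteq> 0"
  shows "cv.span (insert (cscale k (x - s)) B) = cv.span (insert x B)"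
proof -
  have "cscale k (x - s) - cscale k x = cscale (- k) s"
    by (simp add: cscale_def fun_eq_iff algebra_simps)
  then have "cscale k (x - s) - cscale k x \<in> cv.span B"
    using assms(1) cv.span_scale by metis
  moreover have "x - cscale (1 / k) (cscale k (x - s)) = s"
    using assms(2) by (simp add: cscale_def fun_eq_iff)
  then have "x - cscale (1 / k) (cscale k (x - s)) \<in> cv.span B"
    using assms(1) by simp
  ultimately have "cscale k (x - s) \<in> cv.span (insert x B)"
    and "x \<in> cv.span (insert (cscale k (x - s)) B)"
    unfolding cv.span_breakdown_eq by blast+
  then show ?thesis
    by (auto simp: cv.span_eq intro: cv.span_base)
qed

lemma gram_schmidt:
  assumes "finite X" "X \<subseteq> cvecs d"
  obtains B where "finite B" "orthonormal_family d B id" "cv.span B = cv.span X"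
  using assms
proof (induction X arbitrary: thesis rule: finite_induct)
  case empty
  show ?case
    by (rule empty.prems(1)[of "{}"]) (simp_all add: orthonormal_family_def)
next
  case (insert x X)
  obtain B where B: "finite B" "orthonormal_family d B id" "cv.span B = cv.span X"
    using insert.IH insert.prems by blast
  define s where "s = (\<Sum>c\<in>B. cscale (cinner d x c) c)"
  have s: "s \<in> cv.span B"
    unfolding s_def by (intro cv.span_sum cv.span_scale cv.span_base)
  have span_x: "cv.span (insert x X) = cv.span (insert x B)"
    using B(3) by (simp add: cv.span_insert)
  show ?case
  proof (cases "x - s = 0")
    case True
    then have "cv.span (insert x B) = cv.span B"
      using s by (simp add: cv.span_redundant)
    then show ?thesis
      by (intro insert.prems(1)[OF B(1,2)]) (simp add: span_x)
  next
    case False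
    have "B \<subseteq> cvecs d"
      using B(2) by (auto simp: orthonormal_family_def)
    then have "s \<in> cvecs d"
      using s span_subset_cvecs by blast
    then have "x - s \<in> cvecs d"
      using insert.prems(2) by (simp add: cv.subspace_diff[OF subspace_cvecs])
    then obtain k where k: "k \<noteq> 0" "cinner d (cscale k (x - s)) (cscale k (x - s)) = 1"
      using normalise_vector False by blast
    define z where "z = cscale k (x - s)"
    have "z \<in> cvecs d"
      using \<open>x - s \<in> cvecs d\<close> cv.subspace_scale[OF subspace_cvecs] by (simp add: z_def)
    moreover have zb: "cinner d z b = 0" if "b \<in> B" for b
      using cinner_projection_residual[OF B(1,2) that] by (simp add: z_def s_def cinner_scale_left)
    moreover from zb have "cinner d b z = 0" if "b \<in> B" for b
      using that by (metis cinner_commute complex_cnj_zero)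
    moreover have "z \<notin> B"
      using zb k(2) by (force simp: z_def)
    ultimately have "orthonormal_family d (insert z B) id"
      using B(2) k(2) unfolding orthonormal_family_def z_def by auto
    moreover have "cv.span (insert z B) = cv.span (insert x B)"
      unfolding z_def by (rule span_insert_normalised_residual[OF s k(1)])
    ultimately show ?thesis
      using B(1) by (intro insert.prems(1)[of "insert z B"]) (simp_all add: span_x id_def)
  qed
qed

definition unit_vec :: "nat \<Rightarrow> nat \<Rightarrow> complex" where
  "unit_vec n = (\<lambda>i. if i = n then 1 else 0)"

lemma orthonormal_family_unit_vec: "orthonormal_family d {..<d} unit_vec"
proof -
  have "unit_vec a i * cnj (unit_vec b i) = (if i = a then (if a = b then 1 else 0) else 0)" for a b i
    by (simp add: unit_vec_def)
  then have "cinner d (unit_vec a) (unit_vec b) = (if a = b \<and> a < d then 1 else 0)" for a b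
    unfolding cinner_def by (simp add: sum.delta)
  then show ?thesis
    by (auto simp: orthonormal_family_def cvecs_def unit_vec_def)
qed

lemma cvecs_subset_span_unit_vec: "cvecs d \<subseteq> cv.span (unit_vec ` {..<d})"
proof
  fix x
  assume x: "x \<in> cvecs d"
  have "x = (\<Sum>n<d. cscale (x n) (unit_vec n))"
  proof
    fix j
    have "(\<Sum>n<d. cscale (x n) (unit_vec n)) j = (\<Sum>n<d. if n = j then x j else 0)"
      unfolding sum_fun_apply by (intro sum.cong refl) (auto simp: cscale_apply unit_vec_def)
    also have "\<dots> = x j"
      using x by (auto simp: cvecs_def sum.delta')
    finally show "x j = (\<Sum>n<d. cscale (x n) (unit_vec n)) j"
      by simp
  qed
  also have "\<dots> \<in> cv.span (unit_vec ` {..<d})"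
    by (intro cv.span_sum cv.span_scale cv.span_base) auto
  finally show "x \<in> cv.span (unit_vec ` {..<d})" .
qed

lemma subspace_dim_orthonormal_basis:
  assumes "subspace_dim d r S"
  obtains e where "orthonormal_family d {..<r} e" "cv.span (e ` {..<r}) = S"
proof -
  have S: "cv.subspace S" "S \<subseteq> cvecs d" "cv.dim S = r"
    using assms by (auto simp: subspace_dim_def)
  obtain X where X: "X \<subseteq> S" "cv.independent X" "S \<subseteq> cv.span X" "card X = cv.dim S"
    using cv.basis_exists by blast
  have "finite X"
    using cv.independent_span_bound[OF _ X(2)] X(1) S(2) cvecs_subset_span_unit_vec by blast
  moreover have "X \<subseteq> cvecs d"
    using X(1) S(2) by blast
  ultimately obtain B where B: "finite B" "orthonormal_family d B id" "cv.span B = cv.span X"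
    by (rule gram_schmidt)
  have "cv.span X = S"
    using X(1,3) S(1) cv.span_minimal[of X S] by auto
  with B(3) have "cv.span B = S"
    by simp
  have "card B = r"
    using cv.dim_span_eq_card_independent[OF orthonormal_family_independent[OF B(2,1)]]
      \<open>cv.span B = S\<close> S(3) by simp
  then obtain h where h: "bij_betw h {..<r} B"
    using ex_bij_betw_nat_finite[OF B(1)] by (auto simp: atLeast0LessThan)
  show thesis
  proof
    show "orthonormal_family d {..<r} h"
      using orthonormal_family_reindex[OF B(2), of h] h by (simp add: bij_betw_def)
    show "cv.span (h ` {..<r}) = S"
      using h \<open>cv.span B = S\<close> by (simp add: bij_betw_def)
  qed
qed

lemma osr_mono_dim:
  assumes "osr V E d r S" "d \<le> d'"
  shows "osr V E d' r S"
  unfolding osr_def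
proof (intro conjI ballI impI)
  fix u
  assume "u \<in> V"
  then show "subspace_dim d' r (S u)"
    using assms cvecs_mono[OF assms(2)] by (auto simp: osr_def subspace_dim_def)
next
  fix u v
  assume "u \<in> V" "v \<in> V" "{u, v} \<in> E"
  then have "orth_subspaces d (S u) (S v)" "S u \<subseteq> cvecs d"
    using assms by (auto simp: osr_def subspace_dim_def)
  then show "orth_subspaces d' (S u) (S v)"
    using cinner_lift[OF _ assms(2)] unfolding orth_subspaces_def by (metis subsetD)
qed

lemma osr_subgraph: "osr V E d r S \<Longrightarrow> V' \<subseteq> V \<Longrightarrow> E' \<subseteq> E \<Longrightarrow> osr V' E' d r S"
  unfolding osr_def by blast

lemma xi_le: "osr V E d r S \<Longrightarrow> xi r V E \<le> d"
  unfolding xi_def by (rule Least_le) blast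

lemma osr_xi: "osr V E d r S \<Longrightarrow> \<exists>S. osr V E (xi r V E) r S"
  unfolding xi_def by (rule LeastI) blast

lemma osr_orthonormal_family:
  assumes G: "simple_graph V E" and e: "orthonormal_family d (V \<times> {..<r}) e"
  shows "osr V E d r (\<lambda>v. cv.span ((\<lambda>i. e (v, i)) ` {..<r}))"
  unfolding osr_def
proof (intro conjI ballI impI)
  fix v
  assume "v \<in> V"
  then have "orthonormal_family d {..<r} (e \<circ> Pair v)"
    by (intro orthonormal_family_reindex[OF e]) (auto simp: inj_on_def)
  then show "subspace_dim d r (cv.span ((\<lambda>i. e (v, i)) ` {..<r}))"
    using subspace_dim_span_orthonormal_family by (simp add: comp_def)
next
  fix u v
  assume uv: "u \<in> V" "v \<in> V" "{u, v} \<in> E"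
  have "u \<noteq> v"
    using G uv(3) unfolding simple_graph_def by (metis doubleton_eq_iff insert_absorb2)
  then have "\<forall>x\<in>(\<lambda>i. e (u, i)) ` {..<r}. \<forall>y\<in>(\<lambda>i. e (v, i)) ` {..<r}. cinner d x y = 0"
    using e uv(1,2) by (auto simp: orthonormal_family_def)
  then show "orth_subspaces d (cv.span ((\<lambda>i. e (u, i)) ` {..<r})) (cv.span ((\<lambda>i. e (v, i)) ` {..<r}))"
    unfolding orth_subspaces_def using cinner_span_eq_0 by blast
qed

text \<open>Distinct vertices get spans of disjoint sets of standard basis vectors.\<close>
lemma osr_exists:
  assumes G: "simple_graph V E"
  shows "\<exists>S. osr V E (card V * r) r S"
proof -
  have "finite (V \<times> {..<r})"
    using G by (simp add: simple_graph_def)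
  then obtain h where h: "bij_betw h (V \<times> {..<r}) {..<card V * r}"
    using ex_bij_betw_finite_nat by (fastforce simp: card_cartesian_product atLeast0LessThan)
  have "orthonormal_family (card V * r) (V \<times> {..<r}) (unit_vec \<circ> h)"
    using h by (intro orthonormal_family_reindex[OF orthonormal_family_unit_vec]) (auto simp: bij_betw_def)
  then show ?thesis
    using osr_orthonormal_family[OF G] by blast
qed

lemma osr_orthonormal_bases:
  assumes "osr V E d r S"
  obtains e where "\<And>v. v \<in> V \<Longrightarrow> orthonormal_family d {..<r} (e v)"
    "\<And>v. v \<in> V \<Longrightarrow> cv.span (e v ` {..<r}) = S v"
proof -
  have "\<forall>v\<in>V. \<exists>b. orthonormal_family d {..<r} b \<and> cv.span (b ` {..<r}) = S v"
    using assms subspace_dim_orthonormal_basis unfolding osr_def by metis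
  then show thesis
    using that by metis
qed

lemma orthonormal_family_clique:
  assumes S: "osr V E d r S" and e: "\<And>v. v \<in> V \<Longrightarrow> orthonormal_family d {..<r} (e v)"
    "\<And>v. v \<in> V \<Longrightarrow> cv.span (e v ` {..<r}) = S v"
    and K: "K \<subseteq> V" "\<forall>u\<in>K. \<forall>v\<in>K. u \<noteq> v \<longrightarrow> {u, v} \<in> E"
  shows "orthonormal_family d (K \<times> {..<r}) (\<lambda>(v, i). e v i)"
  unfolding orthonormal_family_def
proof (intro conjI ballI)
  fix p
  assume "p \<in> K \<times> {..<r}"
  then show "(\<lambda>(v, i). e v i) p \<in> cvecs d"
    using e(1) K(1) by (auto simp: orthonormal_family_def)
next
  fix p q
  assume "p \<in> K \<times> {..<r}" "q \<in> K \<times> {..<r}"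
  then obtain u i v j where pq: "p = (u, i)" "q = (v, j)" "u \<in> K" "v \<in> K" "i < r" "j < r"
    by blast
  show "cinner d ((\<lambda>(v, i). e v i) p) ((\<lambda>(v, i). e v i) q) = (if p = q then 1 else 0)"
  proof (cases "u = v")
    case True
    then show ?thesis
      using e(1) pq K(1) by (auto simp: orthonormal_family_def)
  next
    case False
    then have "{u, v} \<in> E" "u \<in> V" "v \<in> V"
      using K pq by auto
    then have "orth_subspaces d (S u) (S v)"
      using S unfolding osr_def by blast
    moreover have "e u i \<in> S u" "e v j \<in> S v"
      using e(2) pq K(1) by (auto intro: cv.span_base)
    ultimately show ?thesis
      using False pq by (simp add: orth_subspaces_def)
  qed
qed

lemma osr_unitary_image:
  assumes S: "osr V E d r S" and e: "\<And>v. v \<in> V \<Longrightarrow> orthonormal_family d {..<r} (e v)"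
    "\<And>v. v \<in> V \<Longrightarrow> cv.span (e v ` {..<r}) = S v"
    and U: "unitary d U"
  shows "osr V E d r (\<lambda>v. cv.span ((U \<circ> e v) ` {..<r}))"
  unfolding osr_def
proof (intro conjI ballI impI)
  fix v
  assume "v \<in> V"
  then show "subspace_dim d r (cv.span ((U \<circ> e v) ` {..<r}))"
    by (intro subspace_dim_span_orthonormal_family orthonormal_family_unitary_image e(1) U)
next
  fix u v
  assume uv: "u \<in> V" "v \<in> V" "{u, v} \<in> E"
  have "\<forall>x\<in>(U \<circ> e u) ` {..<r}. \<forall>y\<in>(U \<circ> e v) ` {..<r}. cinner d x y = 0"
  proof clarsimp
    fix i j
    assume "i < r" "j < r"
    have "e u i \<in> S u" "e v j \<in> S v"
      using e(2) uv \<open>i < r\<close> \<open>j < r\<close> by (auto intro: cv.span_base)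
    moreover have "orth_subspaces d (S u) (S v)"
      using S uv by (simp add: osr_def)
    ultimately have "cinner d (e u i) (e v j) = 0"
      by (simp add: orth_subspaces_def)
    then show "cinner d (U (e u i)) (U (e v j)) = 0"
      using U by (simp add: unitary_def)
  qed
  then show "orth_subspaces d (cv.span ((U \<circ> e u) ` {..<r})) (cv.span ((U \<circ> e v) ` {..<r}))"
    unfolding orth_subspaces_def using cinner_span_eq_0 by blast
qed

lemma osr_union:
  assumes "V = V1 \<union> V2" "E = E1 \<union> E2" "\<forall>e\<in>E1. e \<subseteq> V1" "\<forall>e\<in>E2. e \<subseteq> V2"
    and S1: "osr V1 E1 d r S1" and S2: "osr V2 E2 d r S2"
    and agree: "\<And>v. v \<in> V1 \<inter> V2 \<Longrightarrow> S1 v = S2 v"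
  shows "osr V E d r (\<lambda>v. if v \<in> V1 then S1 v else S2 v)"
  unfolding osr_def
proof (intro conjI ballI impI)
  fix v
  assume "v \<in> V"
  then show "subspace_dim d r (if v \<in> V1 then S1 v else S2 v)"
    using assms(1) S1 S2 by (auto simp: osr_def)
next
  fix u v
  assume uv: "u \<in> V" "v \<in> V" "{u, v} \<in> E"
  then consider "{u, v} \<in> E1" | "{u, v} \<in> E2"
    using assms(2) by blast
  then show "orth_subspaces d (if u \<in> V1 then S1 u else S2 u) (if v \<in> V1 then S1 v else S2 v)"
  proof cases
    case 1
    then show ?thesis
      using assms(3) S1 by (auto simp: osr_def)
  next
    case 2
    then have "u \<in> V2" "v \<in> V2"
      using assms(4) by auto
    then show ?thesis
      using 2 S2 agree by (auto simp: osr_def)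
  qed
qed

lemma osr_clique_sum:
  assumes cs: "clique_sum t V E V1 E1 V2 E2" and fin: "finite V1"
    and S1: "osr V1 E1 d r S1" and S2: "osr V2 E2 d r S2"
  shows "\<exists>S. osr V E d r S"
proof -
  define K where "K = V1 \<inter> V2"
  have split: "V = V1 \<union> V2" "E = E1 \<union> E2" "\<forall>e\<in>E1. e \<subseteq> V1" "\<forall>e\<in>E2. e \<subseteq> V2"
    and clique: "\<forall>u\<in>K. \<forall>v\<in>K. u \<noteq> v \<longrightarrow> {u, v} \<in> E1 \<and> {u, v} \<in> E2"
    using cs unfolding clique_sum_def K_def by blast+
  obtain e1 where e1: "\<And>v. v \<in> V1 \<Longrightarrow> orthonormal_family d {..<r} (e1 v)"
    "\<And>v. v \<in> V1 \<Longrightarrow> cv.span (e1 v ` {..<r}) = S1 v"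
    using osr_orthonormal_bases[OF S1] by blast
  obtain e2 where e2: "\<And>v. v \<in> V2 \<Longrightarrow> orthonormal_family d {..<r} (e2 v)"
    "\<And>v. v \<in> V2 \<Longrightarrow> cv.span (e2 v ` {..<r}) = S2 v"
    using osr_orthonormal_bases[OF S2] by blast
  have "finite (K \<times> {..<r})"
    using fin by (simp add: K_def)
  moreover have "orthonormal_family d (K \<times> {..<r}) (\<lambda>(v, i). e2 v i)"
    by (rule orthonormal_family_clique[OF S2 e2]) (use clique in \<open>auto simp: K_def\<close>)
  moreover have "orthonormal_family d (K \<times> {..<r}) (\<lambda>(v, i). e1 v i)"
    by (rule orthonormal_family_clique[OF S1 e1]) (use clique in \<open>auto simp: K_def\<close>)
  ultimately obtain U where U: "unitary d U"
    "\<And>p. p \<in> K \<times> {..<r} \<Longrightarrow> U ((\<lambda>(v, i). e2 v i) p) = (\<lambda>(v, i). e1 v i) p"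
    by (rule unitary_maps_orthonormal_family) blast
  define S2' where "S2' v = cv.span ((U \<circ> e2 v) ` {..<r})" for v
  have "osr V2 E2 d r S2'"
    unfolding S2'_def by (rule osr_unitary_image[OF S2 e2 U(1)])
  moreover have "S1 v = S2' v" if "v \<in> V1 \<inter> V2" for v
  proof -
    have "(U \<circ> e2 v) ` {..<r} = e1 v ` {..<r}"
      using U(2) that by (force simp: K_def)
    then show ?thesis
      using e1(2) that by (simp add: S2'_def)
  qed
  ultimately show ?thesis
    using osr_union[OF split S1] by blast
qed

theorem mainTheorem14:
  fixes V V1 V2 :: "'a set" and E E1 E2 :: "'a set set" and t r :: nat
  assumes "simple_graph V1 E1" and "simple_graph V2 E2"
    and "clique_sum t V E V1 E1 V2 E2"
  shows "xi r V E = max (xi r V1 E1) (xi r V2 E2)"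
proof -
  obtain S1 where S1: "osr V1 E1 (xi r V1 E1) r S1"
    using osr_exists[OF assms(1)] by (blast dest: osr_xi)
  obtain S2 where S2: "osr V2 E2 (xi r V2 E2) r S2"
    using osr_exists[OF assms(2)] by (blast dest: osr_xi)
  have "finite V1"
    using assms(1) by (simp add: simple_graph_def)
  then have "\<exists>S. osr V E (max (xi r V1 E1) (xi r V2 E2)) r S"
    by (rule osr_clique_sum[OF assms(3) _ osr_mono_dim[OF S1] osr_mono_dim[OF S2]]) simp_all
  then obtain S where S: "osr V E (max (xi r V1 E1) (xi r V2 E2)) r S"
    by blast
  then obtain S' where S': "osr V E (xi r V E) r S'"
    by (blast dest: osr_xi)
  have VE: "V = V1 \<union> V2" "E = E1 \<union> E2"
    using assms(3) unfolding clique_sum_def by blast+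
  have "xi r V1 E1 \<le> xi r V E" "xi r V2 E2 \<le> xi r V E"
    by (rule xi_le[OF osr_subgraph[OF S']]; simp add: VE)+
  then show ?thesis
    using xi_le[OF S] by simp
qed
end
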